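(* Let $R>0$, $L>0$ and let $N$ be a positive integer. Let $\theta_0=1$, $\theta_i=\frac{1+\sqrt{1+4\theta_{i-1}^2}}{2}$ for $i=1,\dots,N-1$, $\theta_N=\frac{1+\sqrt{1+8\theta_{N-1}^2}}{2}$, and define $\zeta^*=(\zeta^*_0,\dots,\zeta^*_{N+2})$ by $\zeta^*_{N+2}=0$, $\zeta^*_{N+1}=\frac{\theta_N-1}{\theta_N^2(2\theta_N-1)}R^2$, $\zeta^*_N=\frac{\theta_N}{\theta_N-1}\zeta^*_{N+1}$, and $\zeta^*_i=\frac{2\theta_i}{2\theta_i-1}\zeta^*_{i+1}$ for $i=0,\dots,N-1$. Let $e_0,\dots,e_N$ be the standard unit vectors of $\mathbb{R}^{N+1}$ and set \[ x_{N+1}=-\sum_{j=0}^{N}\frac{\zeta^*_j-\zeta^*_{N+2}}{\sqrt{\zeta^*_j-\zeta^*_{j+1}}}e_j,\qquad f_N=\frac L2(\zeta^*_N+\zeta^*_{N+1}). \] Then $\|x_{N+1}\|=R$ and $f_N=\frac{LR^2}{2\theta_N^2}$. *)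

theory Defs
  imports Complex_Main
begin

fun theta_std :: "nat \<Rightarrow> real" where
  "theta_std 0 = 1"
| "theta_std (Suc i) = (1 + sqrt (1 + 4 * (theta_std i)\<^sup>2)) / 2"

definition theta :: "nat \<Rightarrow> nat \<Rightarrow> real" where
  "theta N i = (if i < N then theta_std i
               else (1 + sqrt (1 + 8 * (theta_std (N - 1))\<^sup>2)) / 2)"

text \<open>zeta_aux N R m is zeta*_(N+2-m), computed by backward recursion.\<close>
fun zeta_aux :: "nat \<Rightarrow> real \<Rightarrow> nat \<Rightarrow> real" where
  "zeta_aux N R 0 = 0"
| "zeta_aux N R (Suc 0) = (theta N N - 1) / ((theta N N)\<^sup>2 * (2 * theta N N - 1)) * R\<^sup>2"
| "zeta_aux N R (Suc (Suc 0)) = theta N N / (theta N N - 1) * zeta_aux N R (Suc 0)"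
| "zeta_aux N R (Suc (Suc (Suc k))) =
     (2 * theta N (N - Suc k)) / (2 * theta N (N - Suc k) - 1) * zeta_aux N R (Suc (Suc k))"

definition zeta :: "nat \<Rightarrow> real \<Rightarrow> nat \<Rightarrow> real" where
  "zeta N R i = zeta_aux N R (N + 2 - i)"

definition xN1 :: "nat \<Rightarrow> real \<Rightarrow> nat \<Rightarrow> real" where
  "xN1 N R j = - (zeta N R j - zeta N R (N + 2)) / sqrt (zeta N R j - zeta N R (Suc j))"

end

theory Submission
  imports Defs
begin

text \<open>
  Write \<open>z\<^sub>i\<close> for \<open>\<zeta>\<^sup>*\<^sub>i\<close> and \<open>T = \<theta>\<^sub>N\<close>. Each step of the backward recursion has the
  shape \<open>z\<^sub>i = c/(c-1) \<cdot> z\<^sub>i\<^sub>+\<^sub>1\<close> (with \<open>c = 2\<theta>\<^sub>i\<close> for \<open>i < N\<close> and \<open>c = T\<close> for \<open>i = N\<close>),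
  which makes the squared coordinate \<open>z\<^sub>i\<^sup>2/(z\<^sub>i - z\<^sub>i\<^sub>+\<^sub>1)\<close> equal to \<open>c \<cdot> z\<^sub>i\<close>.
  Since \<open>\<theta>\<^sub>i\<^sup>2 - \<theta>\<^sub>i = \<theta>\<^sub>i\<^sub>-\<^sub>1\<^sup>2\<close>, the partial sums telescope to
  \<open>\<Sum>\<^sub>j\<^sub><\<^sub>i x\<^sub>j\<^sup>2 = 4(\<theta>\<^sub>i\<^sup>2 - \<theta>\<^sub>i) z\<^sub>i\<close>; with \<open>T\<^sup>2 - T = 2\<theta>\<^sub>N\<^sub>-\<^sub>1\<^sup>2\<close> the full sum becomes
  \<open>T(2T - 1) z\<^sub>N\<close>, and the initial values \<open>z\<^sub>N\<close>, \<open>z\<^sub>N\<^sub>+\<^sub>1\<close> were chosen so that this is \<open>R\<^sup>2\<close>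
  and \<open>z\<^sub>N + z\<^sub>N\<^sub>+\<^sub>1 = R\<^sup>2/T\<^sup>2\<close>.
\<close>

lemma larger_root_sq_minus_self:
  fixes a c T :: real
  assumes "T = (1 + sqrt (1 + c * a\<^sup>2)) / 2" and "c \<ge> 0"
  shows "T\<^sup>2 - T = c / 4 * a\<^sup>2"
proof -
  have "sqrt (1 + c * a\<^sup>2) = 2 * T - 1" using assms(1) by simp
  moreover have "1 + c * a\<^sup>2 \<ge> 0" using assms(2) by simp
  ultimately have "(2 * T - 1)\<^sup>2 = 1 + c * a\<^sup>2" by (metis real_sqrt_pow2)
  then show ?thesis by (simp add: power2_eq_square algebra_simps)
qed

lemma theta_std_ge_one: "theta_std i \<ge> 1"
  by (induction i) auto

lemma theta_std_Suc_sq_minus_self: "(theta_std (Suc i))\<^sup>2 - theta_std (Suc i) = (theta_std i)\<^sup>2"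
  using larger_root_sq_minus_self[of "theta_std (Suc i)" 4 "theta_std i"] by simp

lemma theta_last_ge_two: "theta N N \<ge> 2"
proof -
  have "1 + 8 * (theta_std (N - 1))\<^sup>2 \<ge> 3\<^sup>2"
    using theta_std_ge_one[of "N - 1"] by (simp add: one_le_power)
  then have "sqrt (1 + 8 * (theta_std (N - 1))\<^sup>2) \<ge> 3"
    using real_le_rsqrt by blast
  then show ?thesis unfolding theta_def by simp
qed

lemma theta_last_sq_minus_self: "(theta N N)\<^sup>2 - theta N N = 2 * (theta_std (N - 1))\<^sup>2"
  using larger_root_sq_minus_self[of "theta N N" 8 "theta_std (N - 1)"]
  unfolding theta_def by simp

lemma zeta_step:
  assumes "i < N"
  shows "zeta N R i = 2 * theta_std i / (2 * theta_std i - 1) * zeta N R (Suc i)"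
proof -
  obtain k where k: "N + 2 - i = Suc (Suc (Suc k))" "N - Suc k = i"
    using assms by (intro that[of "N - 1 - i"]) auto
  then have "N + 2 - Suc i = Suc (Suc k)" by simp
  with k assms show ?thesis unfolding zeta_def by (simp add: theta_def)
qed

lemma zeta_last: "zeta N R N = theta N N / (theta N N - 1) * zeta N R (Suc N)"
  unfolding zeta_def by (simp add: numeral_2_eq_2)

lemma zeta_Suc_last:
  "zeta N R (Suc N) = (theta N N - 1) / ((theta N N)\<^sup>2 * (2 * theta N N - 1)) * R\<^sup>2"
  unfolding zeta_def by (simp add: numeral_2_eq_2)

lemma zeta_Suc_Suc_last: "zeta N R (N + 2) = 0"
  unfolding zeta_def by simp

lemma zeta_last_eq: "zeta N R N = R\<^sup>2 / (theta N N * (2 * theta N N - 1))"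
proof -
  have "theta N N \<ge> 2" by (rule theta_last_ge_two)
  then show ?thesis
    unfolding zeta_last zeta_Suc_last by (simp add: power2_eq_square)
qed

lemma zeta_pos:
  assumes "R > 0" and "i \<le> N + 1"
  shows "zeta N R i > 0"
  using assms(2)
proof (induction rule: inc_induct)
  case base
  show ?case using theta_last_ge_two[of N] assms(1)
    by (simp add: zeta_Suc_last zero_less_mult_iff)
next
  case (step i)
  show ?case
  proof (cases "i = N")
    case True
    with step.IH show ?thesis using theta_last_ge_two[of N] by (simp add: zeta_last)
  next
    case False
    with step have "i < N" by simp
    with step.IH show ?thesis using theta_std_ge_one[of i] by (simp add: zeta_step)
  qed
qed

lemma sq_div_gap_of_ratio:
  fixes a b c :: real
  assumes "c > 1" and "b > 0" and "a = c / (c - 1) * b"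
  shows "a\<^sup>2 / (a - b) = c * a"
proof -
  have "a - b = b / (c - 1)" using assms by (simp add: field_simps)
  then have "a\<^sup>2 / (a - b) = a * (c / (c - 1) * b) * (c - 1) / b"
    using assms by (simp add: power2_eq_square)
  also have "\<dots> = c * a" using assms by simp
  finally show ?thesis .
qed

lemma xN1_sq:
  assumes "zeta N R j \<ge> zeta N R (Suc j)"
  shows "(xN1 N R j)\<^sup>2 = (zeta N R j)\<^sup>2 / (zeta N R j - zeta N R (Suc j))"
  using assms unfolding xN1_def zeta_Suc_Suc_last by (simp add: power_divide)

lemma xN1_sq_below_last:
  assumes "R > 0" and "j < N"
  shows "(xN1 N R j)\<^sup>2 = 2 * theta_std j * zeta N R j"
proof -
  have ratio: "zeta N R j = 2 * theta_std j / (2 * theta_std j - 1) * zeta N R (Suc j)"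
    using assms(2) by (rule zeta_step)
  have "2 * theta_std j > 1" and pos: "zeta N R (Suc j) > 0"
    using theta_std_ge_one[of j] zeta_pos assms by auto
  then have "zeta N R j \<ge> zeta N R (Suc j)"
    by (simp add: ratio field_simps)
  then show ?thesis
    using sq_div_gap_of_ratio[OF \<open>2 * theta_std j > 1\<close> pos ratio] by (simp add: xN1_sq)
qed

lemma xN1_sq_last:
  assumes "R > 0"
  shows "(xN1 N R N)\<^sup>2 = theta N N * zeta N R N"
proof -
  have ratio: "zeta N R N = theta N N / (theta N N - 1) * zeta N R (Suc N)"
    using zeta_last by simp
  have "theta N N > 1" and pos: "zeta N R (Suc N) > 0"
    using theta_last_ge_two[of N] zeta_pos assms by auto
  then have "zeta N R N \<ge> zeta N R (Suc N)"
    by (simp add: ratio field_simps)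
  then show ?thesis
    using sq_div_gap_of_ratio[OF \<open>theta N N > 1\<close> pos ratio] by (simp add: xN1_sq)
qed

lemma xN1_sq_sum_lessThan:
  assumes "R > 0" and "i \<le> N"
  shows "(\<Sum>j<i. (xN1 N R j)\<^sup>2) = 4 * ((theta_std i)\<^sup>2 - theta_std i) * zeta N R i"
  using assms(2)
proof (induction i)
  case 0
  show ?case by simp
next
  case (Suc i)
  define t where "t = theta_std i"
  have "i < N" using Suc.prems by simp
  have "(\<Sum>j<Suc i. (xN1 N R j)\<^sup>2) = 4 * (t\<^sup>2 - t) * zeta N R i + 2 * t * zeta N R i"
    using Suc xN1_sq_below_last[OF assms(1) \<open>i < N\<close>] by (simp add: t_def)
  also have "\<dots> = 2 * t * (2 * t - 1) * zeta N R i"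
    by (simp add: algebra_simps power2_eq_square)
  also have "\<dots> = 4 * t\<^sup>2 * zeta N R (Suc i)"
    using zeta_step[OF \<open>i < N\<close>, of R] theta_std_ge_one[of i]
    by (simp add: t_def power2_eq_square)
  finally show ?case
    using theta_std_Suc_sq_minus_self[of i] by (simp add: t_def)
qed

theorem lemma3:
  fixes R L :: real and N :: nat
  assumes "R > 0" and "L > 0" and "N \<ge> 1"
  shows "sqrt (\<Sum>j\<le>N. (xN1 N R j)\<^sup>2) = R
         \<and> L / 2 * (zeta N R N + zeta N R (N + 1)) = L * R\<^sup>2 / (2 * (theta N N)\<^sup>2)"
proof -
  define T where "T = theta N N"
  have T: "T \<ge> 2" using theta_last_ge_two by (simp add: T_def)
  have "(theta_std N)\<^sup>2 - theta_std N = (T\<^sup>2 - T) / 2"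
    using theta_std_Suc_sq_minus_self[of "N - 1"] theta_last_sq_minus_self[of N] assms(3)
    by (simp add: T_def)
  then have "(\<Sum>j\<le>N. (xN1 N R j)\<^sup>2) = 2 * (T\<^sup>2 - T) * zeta N R N + T * zeta N R N"
    using xN1_sq_sum_lessThan[OF assms(1) order_refl] xN1_sq_last[OF assms(1)]
    by (simp add: lessThan_Suc_atMost[symmetric] T_def)
  also have "\<dots> = T * (2 * T - 1) * zeta N R N"
    by (simp add: algebra_simps power2_eq_square)
  also have "\<dots> = R\<^sup>2"
    using T by (simp add: zeta_last_eq T_def[symmetric])
  finally have "sqrt (\<Sum>j\<le>N. (xN1 N R j)\<^sup>2) = R" using assms(1) by simp
  moreover have "zeta N R N + zeta N R (Suc N) = R\<^sup>2 / T\<^sup>2"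
    using T unfolding zeta_last_eq zeta_Suc_last T_def[symmetric]
    by (simp add: divide_simps) (simp add: power2_eq_square algebra_simps)
  ultimately show ?thesis by (simp add: T_def)
qed

end
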